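(* Let $c=(L,A)$ be a layered architecture configuration and $l\in L$. Then for every port $p\in O_l^*$ (the attachment-closure of the output ports of $l$), we have $\pi_c(p)\,\to_c^*\,l$, i.e. the layer owning $p$ is related to $l$ by the reflexive-transitive closure of the syntactic dependency relation.
   Context: Fix a set $\mathtt{SERVICE}$ of services and a set $\mathtt{PORT}$ of ports, with a function $\mathit{type}\colon\mathtt{PORT}\to\mathcal{P}(\mathtt{SERVICE})$, and a partition $\mathtt{PORT}=\mathcal{I}\cup\mathcal{O}$, $\mathcal{I}\cap\mathcal{O}=\emptyset$, into input ports and output ports. For $P\subseteq\mathtt{PORT}$, $\overline{P}=\prod_{p\in P}\mathit{type}(p)$ is the set of valuations of $P$. A layer is a triple $l=(I_l,O_l,f_l)$ with $I_l\subseteq\mathcal{I}$, $O_l\subseteq\mathcal{O}$, $f_l\colon\overline{I_l}\to\mathcal{P}(\overline{O_l})$. A layered architecture configuration is a pair $c=(L,A)$, $L$ a set of layers, $A$ a partial map from $\bigcup_{l\in L}I_l$ to $\bigcup_{l\in L}O_l$, such that distinct layers of $L$ share no ports (for $k\neq l$ in $L$, $(I_k\cup O_k)\cap(I_l\cup O_l)=\emptyset$) and $\mathit{type}(A(i))\subseteq\mathit{type}(i)$ whenever $A(i)$ is defined. Write $\mathrm{Ports}(c)=\bigcup_{l\in L}(I_l\cup O_l)$ and $\mathrm{Out}(c)=\bigcup_{l\in L}O_l$. For a port $p\in\mathrm{Ports}(c)$, $\pi_c(p)$ denotes the unique layer $l\in L$ with $p\in I_l\cup O_l$. The attachment-closure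 of $l\in L$ is the smallest set $O_l^*\subseteq\mathrm{Ports}(c)$ (intersection of all such sets) such that $O_l\subseteq O_l^*$; whenever $A(i)=o$ and $i\in O_l^*$ then $o\in O_l^*$; and whenever $o\in\mathrm{Out}(c)\cap O_l^*$ then $I_{\pi_c(o)}\subseteq O_l^*$. Syntactic dependency is the relation $\to_c\subseteq L\times L$ with $l\to_c l'$ iff there exist $o\in O_l$ and $i\in I_{l'}$ with $A(i)=o$; $\to_c^*$ denotes its reflexive-transitive closure. *)

theory Defs
  imports "HOL-Library.FuncSet"
begin

text \<open>Ports of type 'p, services of type 's. tp gives the type of each port,
  Ins is the set of input ports; output ports are the complement -Ins.
  A valuation of P is an element of PiE P tp.\<close>

type_synonym ('p,'s) layer = "'p set \<times> 'p set \<times> (('p \<Rightarrow> 's) \<Rightarrow> ('p \<Rightarrow> 's) set)"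

definition inp :: "('p,'s) layer \<Rightarrow> 'p set" where "inp l = fst l"
definition outp :: "('p,'s) layer \<Rightarrow> 'p set" where "outp l = fst (snd l)"
definition beh :: "('p,'s) layer \<Rightarrow> ('p \<Rightarrow> 's) \<Rightarrow> ('p \<Rightarrow> 's) set" where "beh l = snd (snd l)"

definition is_layer :: "('p \<Rightarrow> 's set) \<Rightarrow> 'p set \<Rightarrow> ('p,'s) layer \<Rightarrow> bool" where
  "is_layer tp Ins l \<longleftrightarrow> inp l \<subseteq> Ins \<and> outp l \<subseteq> - Ins \<and>
     (\<forall>v \<in> PiE (inp l) tp. beh l v \<subseteq> PiE (outp l) tp)"

definition ports :: "('p,'s) layer set \<Rightarrow> 'p set" where
  "ports L = (\<Union>l\<in>L. inp l \<union> outp l)"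

definition outs :: "('p,'s) layer set \<Rightarrow> 'p set" where
  "outs L = (\<Union>l\<in>L. outp l)"

definition ins :: "('p,'s) layer set \<Rightarrow> 'p set" where
  "ins L = (\<Union>l\<in>L. inp l)"

definition layered_config ::
  "('p \<Rightarrow> 's set) \<Rightarrow> 'p set \<Rightarrow> ('p,'s) layer set \<Rightarrow> ('p \<rightharpoonup> 'p) \<Rightarrow> bool" where
  "layered_config tp Ins L A \<longleftrightarrow>
     (\<forall>l\<in>L. is_layer tp Ins l) \<and>
     dom A \<subseteq> ins L \<and> ran A \<subseteq> outs L \<and>
     (\<forall>k\<in>L. \<forall>l\<in>L. k \<noteq> l \<longrightarrow> (inp k \<union> outp k) \<inter> (inp l \<union> outp l) = {}) \<and>
     (\<forall>i q. A i = Some q \<longrightarrow> tp q \<subseteq> tp i)"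

definition owner :: "('p,'s) layer set \<Rightarrow> 'p \<Rightarrow> ('p,'s) layer" where
  "owner L p = (THE l. l \<in> L \<and> p \<in> inp l \<union> outp l)"

definition att_closure :: "('p,'s) layer set \<Rightarrow> ('p \<rightharpoonup> 'p) \<Rightarrow> ('p,'s) layer \<Rightarrow> 'p set" where
  "att_closure L A l = \<Inter>{S. S \<subseteq> ports L \<and> outp l \<subseteq> S \<and>
       (\<forall>i q. A i = Some q \<and> i \<in> S \<longrightarrow> q \<in> S) \<and>
       (\<forall>q \<in> outs L \<inter> S. inp (owner L q) \<subseteq> S)}"

definition syn_dep :: "('p,'s) layer set \<Rightarrow> ('p \<rightharpoonup> 'p) \<Rightarrow> (('p,'s) layer \<times> ('p,'s) layer) set" where
  "syn_dep L A = {(l, l'). l \<in> L \<and> l' \<in> L \<and> (\<exists>q\<in>outp l. \<exists>i\<in>inp l'. A i = Some q)}"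

end

theory Submission
  imports Defs
begin

text \<open>The ports whose owner reaches l under the reflexive-transitive dependency relation
  satisfy all closure conditions defining the attachment-closure of l, so by minimality
  they contain it. An attachment A i = q is exactly a dependency of the owner of q on the
  owner of i, and an input port of the owner of an output q has the same owner as q.\<close>

lemma owner_eq:
  assumes "layered_config tp Ins L A" "k \<in> L" "q \<in> inp k \<union> outp k"
  shows "owner L q = k"
  unfolding owner_def
proof (rule the_equality)
  show "k \<in> L \<and> q \<in> inp k \<union> outp k" using assms by blast
next
  fix l assume "l \<in> L \<and> q \<in> inp l \<union> outp l"
  with assms show "l = k" unfolding layered_config_def by blast
qed

lemma att_closure_least:
  assumes "S \<subseteq> ports L" "outp l \<subseteq> S"
    and "\<And>i q. A i = Some q \<Longrightarrow> i \<in> S \<Longrightarrow> q \<in> S"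
    and "\<And>q. q \<in> outs L \<Longrightarrow> q \<in> S \<Longrightarrow> inp (owner L q) \<subseteq> S"
  shows "att_closure L A l \<subseteq> S"
  unfolding att_closure_def using assms by (intro Inter_lower) blast

lemma syn_dep_of_attachment:
  assumes lc: "layered_config tp Ins L A" and att: "A i = Some q"
  shows "(owner L q, owner L i) \<in> syn_dep L A"
proof -
  from lc att obtain k where k: "k \<in> L" "q \<in> outp k"
    unfolding layered_config_def outs_def ran_def by blast
  from lc att obtain k' where k': "k' \<in> L" "i \<in> inp k'"
    unfolding layered_config_def ins_def by blast
  have "owner L q = k" "owner L i = k'"
    using owner_eq[OF lc k(1)] owner_eq[OF lc k'(1)] k(2) k'(2) by blast+
  with k k' att show ?thesis unfolding syn_dep_def by blast
qed

theorem mainTheorem2: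
  fixes tp :: "'p \<Rightarrow> 's set" and Ins :: "'p set"
    and L :: "('p,'s) layer set" and A :: "'p \<rightharpoonup> 'p" and l :: "('p,'s) layer"
  assumes "layered_config tp Ins L A"
    and "l \<in> L"
    and "p \<in> att_closure L A l"
  shows "(owner L p, l) \<in> (syn_dep L A)\<^sup>*"
proof -
  note lc = assms(1)
  define S where "S = {q \<in> ports L. (owner L q, l) \<in> (syn_dep L A)\<^sup>*}"
  have "att_closure L A l \<subseteq> S"
  proof (rule att_closure_least)
    show "S \<subseteq> ports L" unfolding S_def by blast
    show "outp l \<subseteq> S"
      using owner_eq[OF lc assms(2)] assms(2) unfolding S_def ports_def by blast
  next
    fix i q assume "A i = Some q" "i \<in> S"
    moreover from lc \<open>A i = Some q\<close> have "q \<in> ports L"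
      unfolding layered_config_def ran_def outs_def ports_def by blast
    ultimately show "q \<in> S"
      using syn_dep_of_attachment[OF lc] unfolding S_def
      by (blast intro: converse_rtrancl_into_rtrancl)
  next
    fix q assume "q \<in> outs L" "q \<in> S"
    then obtain k where k: "k \<in> L" "q \<in> outp k" unfolding outs_def by blast
    then have "owner L q = k" using owner_eq[OF lc] by blast
    with k \<open>q \<in> S\<close> show "inp (owner L q) \<subseteq> S"
      using owner_eq[OF lc k(1)] unfolding S_def ports_def by auto
  qed
  with assms(3) show ?thesis unfolding S_def by blast
qed

end
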